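(* For all Borel probability measures $\mu,\nu$ on $\mathbb{R}$, $$d_{Ku}(\mu,\nu)=\max\{|\mu(I)-\nu(I)| : I\in\mathcal{I}_0\},$$ i.e. the maximum is attained.
   Context: $\mathcal{I}_0$ denotes the set of all non-empty connected subsets of $\mathbb{R}$ (intervals, possibly degenerate single points, possibly unbounded). With $f_\mu(t)=\mu((-\infty,t])$, the Kuiper distance is $d_{Ku}(\mu,\nu)=\sup_{t}(f_\mu(t)-f_\nu(t))+\sup_t(f_\nu(t)-f_\mu(t))$, which equals $\sup\{|\mu(I)-\nu(I)|: I \text{ a non-degenerate interval of }\mathbb{R}\}$. *)

theory Defs
  imports "HOL-Probability.Probability"
begin

definition cdf_of :: "real measure \<Rightarrow> real \<Rightarrow> real" where
  "cdf_of M t = measure M {..t}"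

definition kuiper_dist :: "real measure \<Rightarrow> real measure \<Rightarrow> real" where
  "kuiper_dist M N =
     (SUP t. cdf_of M t - cdf_of N t) + (SUP t. cdf_of N t - cdf_of M t)"

definition I0 :: "real set set" where
  "I0 = {I. I \<noteq> {} \<and> connected I}"

end

theory Submission
  imports Defs
begin

text \<open>
  Every interval is the difference \<open>B - A\<close> of two nested down-sets, and on a down-set
  (a half-line, \<open>{}\<close> or \<open>\<real>\<close>) the signed difference \<open>\<mu> - \<nu>\<close> is a limit of values
  \<open>F\<^sub>\<mu>(t) - F\<^sub>\<nu>(t)\<close>, so it lies between \<open>-b\<close> and \<open>a\<close>, the two suprema in the Kuiper
  distance; hence \<open>|\<mu>(I) - \<nu>(I)| \<le> a + b\<close>. Conversely, along a monotone sequence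
  \<open>t\<^sub>n\<close> with \<open>F\<^sub>\<mu>(t\<^sub>n) - F\<^sub>\<nu>(t\<^sub>n) \<rightarrow> a\<close> the half-lines \<open>{..t\<^sub>n}\<close> converge monotonically to a
  down-set \<open>L\<close>, and continuity of measure gives \<open>\<mu>(L) - \<nu>(L) = a\<close>; likewise \<open>b\<close> is
  attained on a down-set \<open>L'\<close>. Down-sets are nested, so the difference of \<open>L\<close> and \<open>L'\<close>
  is an interval on which \<open>|\<mu> - \<nu>|\<close> equals \<open>a + b\<close>.
\<close>

definition downset :: "'a::order set \<Rightarrow> bool" where
  "downset L \<longleftrightarrow> (\<forall>x y. x \<le> y \<longrightarrow> y \<in> L \<longrightarrow> x \<in> L)"

lemma downset_linear:
  fixes A B :: "'a::linorder set"
  shows "downset A \<Longrightarrow> downset B \<Longrightarrow> A \<subseteq> B \<or> B \<subseteq> A"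
  unfolding downset_def by (meson linear subsetI)

lemma downset_real_cases:
  fixes L :: "real set"
  assumes "downset L"
  obtains "L = {}" | "L = UNIV" | t where "L = {..t}" | t where "L = {..<t}"
proof -
  consider "L = {} \<or> L = UNIV" | z y where "z \<notin> L" "y \<in> L"
    by blast
  then show thesis
  proof cases
    case 2
    have bdd: "bdd_above L"
      using assms \<open>z \<notin> L\<close> unfolding downset_def bdd_above_def by (meson linear)
    have "L \<subseteq> {..Sup L}"
      using bdd by (auto intro: cSup_upper)
    moreover have "x \<in> L" if "x < Sup L" for x
    proof -
      obtain y' where "y' \<in> L" "x < y'"
        using less_cSup_iff[of L x] bdd \<open>y \<in> L\<close> \<open>x < Sup L\<close> by blast
      then show ?thesis
        using assms unfolding downset_def by (meson less_imp_le)
    qed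
    ultimately have "L = {..Sup L} \<or> L = {..<Sup L}"
      by (cases "Sup L \<in> L") (auto simp: order.order_iff_strict)
    then show thesis
      using that by blast
  qed (use that in blast)
qed

lemma downset_borel:
  fixes L :: "real set"
  assumes "downset L"
  shows "L \<in> sets borel"
  using assms by (cases rule: downset_real_cases) simp_all

lemma connected_diff_downset:
  fixes A B :: "real set"
  assumes "downset A" "downset B"
  shows "connected (B - A)"
proof -
  have "is_interval (B - A)"
    using assms unfolding is_interval_1 downset_def by blast
  then show ?thesis
    by (rule is_interval_connected_1[THEN iffD1])
qed

lemma I0_eq_diff_downset:
  assumes "I \<in> I0"
  obtains A B :: "real set" where "downset A" "downset B" "A \<subseteq> B" "I = B - A"
proof
  have ne: "I \<noteq> {}" and iv: "is_interval I"
    using assms unfolding I0_def by (auto simp: is_interval_connected_1)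
  define A where "A = {x. \<forall>y\<in>I. x < y}"
  define B where "B = {x. \<exists>y\<in>I. x \<le> y}"
  show "downset A"
    unfolding downset_def A_def by (simp add: order_le_less_trans)
  show "downset B"
    unfolding downset_def B_def by (simp add: Bex_def) (meson order_trans)
  show "A \<subseteq> B"
    using ne unfolding A_def B_def by (auto intro: less_imp_le)
  show "I = B - A"
  proof
    show "I \<subseteq> B - A"
      unfolding A_def B_def by auto
    show "B - A \<subseteq> I"
    proof
      fix x
      assume "x \<in> B - A"
      then obtain y z where "y \<in> I" "x \<le> y" "z \<in> I" "z \<le> x"
        unfolding A_def B_def by (auto simp: not_less)
      then show "x \<in> I"
        using iv unfolding is_interval_1 by blast
    qed
  qed
qed

lemma liminf_incseq_set:
  fixes A :: "nat \<Rightarrow> 'a set"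
  assumes "incseq A"
  shows "liminf A = (\<Union>n. A n)"
proof (intro set_eqI iffI)
  fix x
  assume "x \<in> liminf A"
  then obtain N where "\<forall>n\<ge>N. x \<in> A n"
    unfolding mem_liminf_iff eventually_sequentially by blast
  then show "x \<in> (\<Union>n. A n)"
    by blast
next
  fix x
  assume "x \<in> (\<Union>n. A n)"
  then obtain N where "x \<in> A N"
    by blast
  then have "\<forall>n\<ge>N. x \<in> A n"
    using assms unfolding incseq_def by blast
  then show "x \<in> liminf A"
    unfolding mem_liminf_iff eventually_sequentially by blast
qed

lemma liminf_decseq_set:
  fixes A :: "nat \<Rightarrow> 'a set"
  assumes "decseq A"
  shows "liminf A = (\<Inter>n. A n)"
proof (intro set_eqI iffI)
  fix x
  assume "x \<in> liminf A"
  then obtain N where N: "\<forall>n\<ge>N. x \<in> A n"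
    unfolding mem_liminf_iff eventually_sequentially by blast
  show "x \<in> (\<Inter>n. A n)"
  proof
    fix n
    have "x \<in> A (max n N)"
      using N by simp
    then show "x \<in> A n"
      using assms unfolding decseq_def by (meson max.cobounded1 subsetD)
  qed
next
  fix x
  assume "x \<in> (\<Inter>n. A n)"
  then show "x \<in> liminf A"
    unfolding mem_liminf_iff by (simp add: always_eventually)
qed

lemma finite_Lim_measure_liminf:
  assumes "finite_measure M" "range A \<subseteq> sets M" "incseq A \<or> decseq A"
  shows "(\<lambda>n. measure M (A n)) \<longlonglongrightarrow> measure M (liminf A)"
  using assms(3)
proof
  assume "incseq A"
  then show ?thesis
    using finite_measure.finite_Lim_measure_incseq[OF assms(1,2)] liminf_incseq_set by metis
next
  assume "decseq A"
  then show ?thesis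
    using finite_measure.finite_Lim_measure_decseq[OF assms(1,2)] liminf_decseq_set by metis
qed

lemma exists_monoseq_tendsto_SUP:
  fixes h :: "'a::linorder \<Rightarrow> real"
  assumes "bdd_above (range h)"
  obtains u where "monoseq u" "(\<lambda>n. h (u n)) \<longlonglongrightarrow> (SUP t. h t)"
proof -
  have "(SUP t. h t) \<in> closure (range h)"
    by (rule closure_contains_Sup) (use assms in auto)
  then obtain y where y: "\<And>n. y n \<in> range h" "y \<longlonglongrightarrow> (SUP t. h t)"
    unfolding closure_sequential by blast
  define t where "t n = inv h (y n)" for n
  have h_t: "h (t n) = y n" for n
    unfolding t_def using y(1) by (rule f_inv_into_f)
  obtain f where f: "strict_mono f" "monoseq (\<lambda>n. t (f n))"
    using seq_monosub[of t] by blast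
  have "(\<lambda>n. h (t (f n))) \<longlonglongrightarrow> (SUP t. h t)"
    using LIMSEQ_subseq_LIMSEQ[OF y(2) f(1)] by (simp add: comp_def h_t)
  with f(2) show thesis
    by (rule that)
qed

lemma measure_Diff_downset:
  assumes "finite_borel_measure M" "downset A" "downset B" "A \<subseteq> B"
  shows "measure M (B - A) = measure M B - measure M A"
proof -
  interpret finite_borel_measure M by fact
  show ?thesis
    using assms(2-4) downset_borel by (intro finite_measure_Diff) auto
qed

lemma bdd_above_cdf_diff:
  assumes "finite_measure M"
  shows "bdd_above (range (\<lambda>t. cdf_of M t - cdf_of N t))"
proof (rule bdd_aboveI2)
  show "cdf_of M t - cdf_of N t \<le> measure M (space M)" for t
    using finite_measure.bounded_measure[OF assms, of "{..t}"] measure_nonneg[of N "{..t}"]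
    unfolding cdf_of_def by linarith
qed

lemma measure_diff_downset_le_SUP:
  assumes M: "finite_borel_measure M" and N: "finite_borel_measure N" and "downset L"
  shows "measure M L - measure N L \<le> (SUP t. cdf_of M t - cdf_of N t)"
proof -
  interpret M: finite_borel_measure M by fact
  interpret N: finite_borel_measure N by fact
  let ?h = "\<lambda>t. cdf_of M t - cdf_of N t"
  have cdf: "cdf_of M = cdf M" "cdf_of N = cdf N"
    by (simp_all add: fun_eq_iff cdf_of_def cdf_def)
  have le: "?h t \<le> (SUP t. ?h t)" for t
    by (rule cSUP_upper[OF UNIV_I bdd_above_cdf_diff[OF M.finite_measure_axioms]])
  have lim_le: "c \<le> (SUP t. ?h t)" if "((\<lambda>t. cdf M t - cdf N t) \<longlongrightarrow> c) F" "F \<noteq> bot" for c F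
    using tendsto_upperbound[OF that(1) _ that(2)] le unfolding cdf by simp
  have space: "space M = UNIV" "space N = UNIV"
    using sets_eq_imp_space_eq[OF M.M_is_borel] sets_eq_imp_space_eq[OF N.M_is_borel] by simp_all
  from \<open>downset L\<close> show ?thesis
  proof (cases rule: downset_real_cases)
    case 1
    show ?thesis
      using lim_le[OF tendsto_diff[OF M.cdf_lim_at_bot N.cdf_lim_at_bot] trivial_limit_at_bot_linorder]
      unfolding cdf 1 by simp
  next
    case 2
    show ?thesis
      using lim_le[OF tendsto_diff[OF M.cdf_lim_at_top N.cdf_lim_at_top] trivial_limit_at_top_linorder]
      unfolding cdf 2 space by simp
  next
    case (3 t)
    show ?thesis
      using le[of t] unfolding 3 cdf_of_def by simp
  next
    case (4 t)
    show ?thesis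
      using lim_le[OF tendsto_diff[OF M.cdf_at_left N.cdf_at_left] trivial_limit_at_left_real]
      unfolding cdf 4 by simp
  qed
qed

lemma SUP_cdf_diff_attained:
  assumes M: "finite_borel_measure M" and N: "finite_borel_measure N"
  obtains L where "downset L" "measure M L - measure N L = (SUP t. cdf_of M t - cdf_of N t)"
proof -
  interpret M: finite_borel_measure M by fact
  interpret N: finite_borel_measure N by fact
  obtain u where u: "monoseq u"
    "(\<lambda>n. cdf_of M (u n) - cdf_of N (u n)) \<longlonglongrightarrow> (SUP t. cdf_of M t - cdf_of N t)"
    using exists_monoseq_tendsto_SUP[OF bdd_above_cdf_diff[OF M.finite_measure_axioms]] by blast
  define L where "L = liminf (\<lambda>n. {..u n})"
  have "downset L"
    unfolding L_def downset_def mem_liminf_iff atMost_iff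
  proof (intro allI impI)
    fix x y :: real
    assume "x \<le> y" "\<forall>\<^sub>F n in sequentially. y \<le> u n"
    from this(2) show "\<forall>\<^sub>F n in sequentially. x \<le> u n"
      by (rule eventually_mono) (use \<open>x \<le> y\<close> in linarith)
  qed
  have mono: "incseq (\<lambda>n. {..u n}) \<or> decseq (\<lambda>n. {..u n})"
    using u(1) unfolding monoseq_iff incseq_def decseq_def by simp
  have "(\<lambda>n. cdf_of M (u n) - cdf_of N (u n)) \<longlonglongrightarrow> measure M L - measure N L"
    unfolding cdf_of_def L_def
    by (intro tendsto_diff finite_Lim_measure_liminf[OF _ _ mono]
        M.finite_measure_axioms N.finite_measure_axioms) auto
  with u(2) show thesis
    using that[OF \<open>downset L\<close>] LIMSEQ_unique by blast
qed

lemma abs_measure_diff_le_kuiper_dist: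
  assumes M: "finite_borel_measure M" and N: "finite_borel_measure N" and "I \<in> I0"
  shows "\<bar>measure M I - measure N I\<bar> \<le> kuiper_dist M N"
proof -
  obtain A B where AB: "downset A" "downset B" "A \<subseteq> B" "I = B - A"
    using I0_eq_diff_downset[OF \<open>I \<in> I0\<close>] by blast
  have diff: "measure M I - measure N I = (measure M B - measure N B) - (measure M A - measure N A)"
    using measure_Diff_downset[OF M AB(1-3)] measure_Diff_downset[OF N AB(1-3)] AB(4) by simp
  have bound: "- (SUP t. cdf_of N t - cdf_of M t) \<le> measure M X - measure N X
      \<and> measure M X - measure N X \<le> (SUP t. cdf_of M t - cdf_of N t)" if "downset X" for X
    using measure_diff_downset_le_SUP[OF M N that] measure_diff_downset_le_SUP[OF N M that]
    by linarith
  show ?thesis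
    using diff bound[OF AB(1)] bound[OF AB(2)] unfolding kuiper_dist_def abs_le_iff by linarith
qed

lemma kuiper_dist_nonneg:
  assumes M: "finite_borel_measure M" and N: "finite_borel_measure N"
  shows "0 \<le> kuiper_dist M N"
  using measure_diff_downset_le_SUP[OF M N, of "{}"] measure_diff_downset_le_SUP[OF N M, of "{}"]
  unfolding kuiper_dist_def downset_def by simp

lemma abs_measure_diff_attains_kuiper_dist:
  assumes M: "finite_borel_measure M" and N: "finite_borel_measure N"
  shows "\<exists>I\<in>I0. \<bar>measure M I - measure N I\<bar> = kuiper_dist M N"
proof -
  obtain L where L: "downset L" "measure M L - measure N L = (SUP t. cdf_of M t - cdf_of N t)"
    using SUP_cdf_diff_attained[OF M N] .
  obtain L' where L': "downset L'" "measure N L' - measure M L' = (SUP t. cdf_of N t - cdf_of M t)"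
    using SUP_cdf_diff_attained[OF N M] .
  have nonneg: "0 \<le> kuiper_dist M N"
    by (rule kuiper_dist_nonneg[OF M N])
  obtain D where D: "D = L - L' \<or> D = L' - L" "\<bar>measure M D - measure N D\<bar> = kuiper_dist M N"
  proof (cases "L' \<subseteq> L")
    case True
    have "measure M (L - L') - measure N (L - L') = kuiper_dist M N"
      using L(2) L'(2) unfolding measure_Diff_downset[OF M L'(1) L(1) True]
        measure_Diff_downset[OF N L'(1) L(1) True] kuiper_dist_def by linarith
    then show thesis
      using that[of "L - L'"] nonneg by simp
  next
    case False
    then have "L \<subseteq> L'"
      using downset_linear[OF L(1) L'(1)] by blast
    have "measure M (L' - L) - measure N (L' - L) = - kuiper_dist M N"
      using L(2) L'(2) unfolding measure_Diff_downset[OF M L(1) L'(1) \<open>L \<subseteq> L'\<close>]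
        measure_Diff_downset[OF N L(1) L'(1) \<open>L \<subseteq> L'\<close>] kuiper_dist_def by linarith
    then show thesis
      using that[of "L' - L"] nonneg by simp
  qed
  show ?thesis
  proof (cases "D = {}")
    case True
    then have "kuiper_dist M N = 0"
      using D(2) by simp
    moreover have "{0} \<in> I0"
      unfolding I0_def by simp
    ultimately show ?thesis
      using abs_measure_diff_le_kuiper_dist[OF M N, of "{0}"] by (intro bexI[of _ "{0}"]) simp_all
  next
    case False
    then have "D \<in> I0"
      using D(1) connected_diff_downset L(1) L'(1) unfolding I0_def by blast
    with D(2) show ?thesis
      by blast
  qed
qed

theorem lemma2p1:
  fixes M N :: "real measure"
  assumes "prob_space M" and "sets M = sets borel"
      and "prob_space N" and "sets N = sets borel"
  shows "(\<exists>I\<in>I0. \<bar>measure M I - measure N I\<bar> = kuiper_dist M N)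
       \<and> (\<forall>I\<in>I0. \<bar>measure M I - measure N I\<bar> \<le> kuiper_dist M N)"
proof -
  have M: "finite_borel_measure M" and N: "finite_borel_measure N"
    using assms real_distribution.finite_borel_measure_M by (simp_all add: real_distribution_def
        real_distribution_axioms_def)
  show ?thesis
    using abs_measure_diff_attains_kuiper_dist[OF M N] abs_measure_diff_le_kuiper_dist[OF M N]
    by blast
qed

end
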